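(* Let $R$ be a ring with identity and involution $*$. Consider the conditions: (1) $R$ is directly finite, i.e. for all $a,b\in R$, $ab=1$ implies $ba=1$; (2) for all $a,b\in R$, if $bab=b$, $(ab)^*=ab$ and $ba^2=a$, then $a$ is core invertible with $a^{\oplus}=b$; (3) for all $a,b\in R$, if $aba=a$, $(ab)^*=ab$ and $ba^2=a$, then $a$ is core invertible with $a^{\oplus}=bab$; (4) for all $a\in R$, if $a^*a=1$, then $aa^*=1$. Then (1) $\Rightarrow$ (2) $\Rightarrow$ (3) $\Rightarrow$ (4).
   Context: An involution on $R$ satisfies $(a^* )^*=a$, $(ab)^*=b^*a^*$, $(a+b)^*=a^*+b^*$. An element $x\in R$ is a core inverse of $a$ if $axa=a$, $xR=aR$ and $Rx=Ra^*$; it is unique when it exists and is denoted $a^{\oplus}$. *)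

theory Defs
  imports Main
begin

definition is_involution :: "('a::ring_1 \<Rightarrow> 'a) \<Rightarrow> bool" where
  "is_involution s \<longleftrightarrow> (\<forall>a. s (s a) = a) \<and> (\<forall>a b. s (a * b) = s b * s a)
     \<and> (\<forall>a b. s (a + b) = s a + s b)"

definition core_inverse :: "('a::ring_1 \<Rightarrow> 'a) \<Rightarrow> 'a \<Rightarrow> 'a \<Rightarrow> bool" where
  "core_inverse s a x \<longleftrightarrow> a * x * a = a
     \<and> {x * r | r. True} = {a * r | r. True}
     \<and> {r * x | r. True} = {r * s a | r. True}"

definition directly_finite :: "'a::ring_1 itself \<Rightarrow> bool" where
  "directly_finite _ \<longleftrightarrow> (\<forall>a b::'a. a * b = 1 \<longrightarrow> b * a = 1)"

end

theory Submission
  imports Defs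
begin

text \<open>For (1) \<Rightarrow> (2), put \<open>X = a + (1 - ab)\<close> and \<open>Y = b + (1 - ba)\<close>.
  The hypotheses \<open>bab = b\<close> and \<open>ba\<^sup>2 = a\<close> give \<open>YX = 1\<close>; direct finiteness turns this into
  \<open>XY = 1\<close>, i.e. \<open>(a - aba) + (b - ab\<^sup>2)(1 - a) = 0\<close>, and multiplying on the right by \<open>ab\<close>
  kills the first summand and leaves \<open>b - ab\<^sup>2\<close> from the second. So \<open>aba = a\<close> and
  \<open>b = ab\<^sup>2\<close>, which make \<open>b\<close> the core inverse of \<open>a\<close>. For (2) \<Rightarrow> (3) apply (2) to \<open>bab\<close>.
  For (3) \<Rightarrow> (4), \<open>b = a\<^sup>*\<close> satisfies the hypotheses of (3), so \<open>a\<^sup>* = a\<^sup>\<oplus>\<close> lies in \<open>aR\<close>;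
  a left inverse of \<open>a\<close> lying in \<open>aR\<close> is also a right inverse.\<close>

lemma involution_mult:
  assumes "is_involution s"
  shows "s (x * y) = s y * s x"
  using assms unfolding is_involution_def by blast

lemma involution_involutive:
  assumes "is_involution s"
  shows "s (s x) = x"
  using assms unfolding is_involution_def by blast

lemma right_ideal_eqI:
  fixes a x :: "'a::ring_1"
  assumes "x = a * u" "a = x * v"
  shows "{x * r | r. True} = {a * r | r. True}"
proof -
  have "\<And>r. x * r = a * (u * r)" by (simp only: assms(1) mult.assoc)
  moreover have "\<And>r. a * r = x * (v * r)" by (simp only: assms(2) mult.assoc)
  ultimately show ?thesis by blast
qed

lemma left_ideal_eqI:
  fixes a x :: "'a::ring_1"
  assumes "x = u * a" "a = v * x"
  shows "{r * x | r. True} = {r * a | r. True}"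
proof -
  have "\<And>r. r * x = (r * u) * a" by (simp only: assms(1) mult.assoc)
  moreover have "\<And>r. r * a = (r * v) * x" by (simp only: assms(2) mult.assoc)
  ultimately show ?thesis by blast
qed

lemma core_inverseI:
  fixes a b :: "'a::ring_1"
  assumes inv: "is_involution s"
    and aba: "a * b * a = a" and abb: "b = a * b * b"
    and herm: "s (a * b) = a * b" and baa: "b * a * a = a"
  shows "core_inverse s a b"
proof -
  have bab: "b * a * b = b"
    by (metis abb baa mult.assoc)
  have "b = (b * s b) * s a"
    using bab herm by (metis inv involution_mult mult.assoc)
  moreover have "s a = (s a * a) * b"
    using aba herm by (metis inv involution_mult mult.assoc)
  moreover have "b = a * (b * b)" "a = b * (a * a)"
    using abb baa by (simp_all add: mult.assoc)
  ultimately show ?thesis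
    unfolding core_inverse_def
    using aba right_ideal_eqI[of b a] left_ideal_eqI[of b _ "s a"] by blast
qed

lemma directly_finite_inner_inverse:
  fixes a b :: "'a::ring_1"
  assumes df: "directly_finite TYPE('a)"
    and bab: "b * a * b = b" and baa: "b * a * a = a"
  shows "a * b * a = a" and "b = a * b * b"
proof -
  define X where "X = a + (1 - a * b)"
  define Y where "Y = b + (1 - b * a)"
  have "Y * X = 1"
    unfolding X_def Y_def
    by (simp add: algebra_simps bab baa flip: mult.assoc)
  then have "X * Y = 1"
    using df unfolding directly_finite_def by blast
  then have defect: "(a - a * b * a) + (b - a * b * b) * (1 - a) = 0"
    unfolding X_def Y_def by (simp add: algebra_simps)
  have ab_idem: "a * b * (a * b) = a * b"
    using bab by (simp add: mult.assoc)
  have "(a - a * b * a) * (a * b) = a * a * b - a * (b * a * a) * b"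
    by (simp add: left_diff_distrib mult.assoc)
  also have "\<dots> = 0"
    using baa by simp
  finally have first: "(a - a * b * a) * (a * b) = 0" .
  have "(b - a * b * b) * (1 - a) * (a * b)
      = (b * a * b - a * b * (b * a * b)) - (b * a * a * b - a * b * (b * a * a * b))"
    by (simp add: algebra_simps)
  also have "\<dots> = b - a * b * b"
    using bab baa ab_idem by simp
  finally have second: "(b - a * b * b) * (1 - a) * (a * b) = b - a * b * b" .
  have "0 = ((a - a * b * a) + (b - a * b * b) * (1 - a)) * (a * b)"
    using defect by simp
  also have "\<dots> = b - a * b * b"
    using first second by (simp add: distrib_right)
  finally show abb: "b = a * b * b"
    by simp
  show "a * b * a = a"
    using defect abb by simp
qed

lemma inner_inverse_sandwich:
  fixes a b :: "'a::monoid_mult"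
  assumes aba: "a * b * a = a"
  shows "b * a * b * a * (b * a * b) = b * a * b"
    and "a * (b * a * b) = a * b"
    and "b * a * b * a ^ 2 = b * a ^ 2"
proof -
  have "b * a * b * a * (b * a * b) = b * (a * b * a) * (b * a * b)"
    by (simp add: mult.assoc)
  also have "\<dots> = b * a * (b * a * b)"
    by (simp only: aba)
  also have "\<dots> = b * (a * b * a) * b"
    by (simp add: mult.assoc)
  finally show "b * a * b * a * (b * a * b) = b * a * b"
    by (simp only: aba)
  show "a * (b * a * b) = a * b"
    using aba by (simp add: mult.assoc [symmetric])
  have "b * a * b * a ^ 2 = b * (a * b * a) * a"
    by (simp add: power2_eq_square mult.assoc)
  then show "b * a * b * a ^ 2 = b * a ^ 2"
    by (simp only: aba) (simp add: power2_eq_square mult.assoc)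
qed

lemma core_inverse_in_right_ideal:
  assumes "core_inverse s a x"
  shows "x \<in> {a * r | r. True}"
proof -
  have "x \<in> {x * r | r. True}"
    by (metis (mono_tags, lifting) mem_Collect_eq mult_1_right)
  moreover have "{x * r | r. True} = {a * r | r. True}"
    using assms unfolding core_inverse_def by blast
  ultimately show ?thesis
    by (simp only:)
qed

lemma right_inverse_if_left_inverse_in_right_ideal:
  fixes a x :: "'a::monoid_mult"
  assumes xa: "x * a = 1" and x: "x = a * u"
  shows "a * x = 1"
proof -
  have "u = x * x"
    using xa x by (metis mult.assoc mult_1_left)
  with x have "x = a * x * x"
    by (simp add: mult.assoc)
  then have "x * a = a * x * (x * a)"
    by (metis mult.assoc)
  then show ?thesis
    using xa by simp
qed

theorem theorem3p10:
  fixes s :: "'a::ring_1 \<Rightarrow> 'a"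
  assumes "is_involution s"
  shows "(directly_finite TYPE('a) \<longrightarrow>
           (\<forall>a b::'a. b * a * b = b \<and> s (a * b) = a * b \<and> b * a ^ 2 = a \<longrightarrow> core_inverse s a b))
       \<and> ((\<forall>a b::'a. b * a * b = b \<and> s (a * b) = a * b \<and> b * a ^ 2 = a \<longrightarrow> core_inverse s a b) \<longrightarrow>
           (\<forall>a b::'a. a * b * a = a \<and> s (a * b) = a * b \<and> b * a ^ 2 = a \<longrightarrow> core_inverse s a (b * a * b)))
       \<and> ((\<forall>a b::'a. a * b * a = a \<and> s (a * b) = a * b \<and> b * a ^ 2 = a \<longrightarrow> core_inverse s a (b * a * b)) \<longrightarrow>
           (\<forall>a::'a. s a * a = 1 \<longrightarrow> a * s a = 1))"
proof (intro conjI impI allI)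
  fix a b :: 'a
  assume df: "directly_finite TYPE('a)"
    and hyps: "b * a * b = b \<and> s (a * b) = a * b \<and> b * a ^ 2 = a"
  then have bab: "b * a * b = b" and baa: "b * a * a = a"
    by (simp_all add: power2_eq_square mult.assoc)
  show "core_inverse s a b"
    using core_inverseI[OF assms directly_finite_inner_inverse[OF df bab baa]] hyps baa
    by blast
next
  fix a b :: 'a
  assume "\<forall>a b::'a. b * a * b = b \<and> s (a * b) = a * b \<and> b * a ^ 2 = a \<longrightarrow> core_inverse s a b"
    and "a * b * a = a \<and> s (a * b) = a * b \<and> b * a ^ 2 = a"
  then show "core_inverse s a (b * a * b)"
    using inner_inverse_sandwich[of a b] by simp
next
  fix a :: 'a
  assume three: "\<forall>a b::'a. a * b * a = a \<and> s (a * b) = a * b \<and> b * a ^ 2 = a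
                    \<longrightarrow> core_inverse s a (b * a * b)"
    and isometry: "s a * a = 1"
  have "s (a * s a) = a * s a"
    using assms by (simp add: involution_mult involution_involutive)
  moreover have "a * s a * a = a"
    using isometry by (simp add: mult.assoc)
  moreover have "s a * a * s a = s a" "s a * a ^ 2 = a"
    using isometry by (simp_all add: power2_eq_square flip: mult.assoc)
  ultimately have "core_inverse s a (s a)"
    using three by metis
  then obtain u where "s a = a * u"
    using core_inverse_in_right_ideal by blast
  then show "a * s a = 1"
    using isometry right_inverse_if_left_inverse_in_right_ideal by blast
qed

end
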